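(* Let $J$ be a cone with joins. Then: (a) $(x+y)\wedge z\le x\wedge z+y\wedge z$ for all $x,y,z\in J$; (b) if $x+y=z+w$ then $x+y=x\vee z+y\wedge w$; in particular $x+y=x\vee y+x\wedge y$ for all $x,y\in J$; (c) for every family $(x_i)\subset J$ and $y\in J$: $\sup_i(x_i\wedge y)\le(\sup_ix_i)\wedge y\le\sup_i(x_i\wedge y)+\varepsilon(y\vee\sup_ix_i)$; (d) if $v_1+v_2=w_1+w_2$ then there are $z_{ij}\in J$, $i,j=1,2$, with $z_{11}+z_{12}=v_1$, $z_{21}+z_{22}=v_2+\varepsilon v_1$, $z_{11}+z_{21}=w_1$, $z_{12}+z_{22}=w_2+\varepsilon w_1$; (e) if $v_1+v_2=w_1+w_2$ then there are $z_{ij}\in J$, $i,j=1,2$, with $z_{11}+z_{12}=v_1$, $z_{21}+z_{22}=v_2$, $z_{11}+z_{21}+\varepsilon w_2\ge w_1$, $z_{12}+z_{22}+\varepsilon w_1\ge w_2$.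
   Context: A prewedge is a set $W$ with a commutative associative addition with neutral element $0$ and a multiplication $[0,\infty)\times W\to W$ such that $\lambda(\eta v)=(\lambda\eta)v$, $0v=0$, $1v=v$, $(\lambda+\eta)v=\lambda v+\eta v$, $\lambda(v+w)=\lambda v+\lambda w$; it carries the preorder $v\le w$ iff $v+z=w$ for some $z$. A wedge is a prewedge in which $\le$ is antisymmetric and $v=\sup_{\eta<1}\eta v$ for every $v$. A cone is a wedge in which every directed subset (a subset in which every finite subset, including the empty one, has an upper bound in the subset) has a supremum. A cone with joins is a cone $J$ in which every subset $A$ has an infimum and $\inf(v+A)=v+\inf A$ for all $v\in J$, $A\subset J$, where $v+A=\{v+a:a\in A\}$; it is a complete lattice, and $\vee,\wedge$ denote the supremum and infimum of two elements. For $v$ in a cone, $\varepsilon v:=\inf\{\lambda v:\lambda>0\}$ (the part at infinity of $v$). *)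

theory Defs
  imports Complex_Main
begin

text \<open>A cone with joins is represented by its carrier type 'a together with
an addition, a zero and a multiplication by nonnegative reals (values of the
scalar multiplication at negative scalars are irrelevant).\<close>

definition prewedge :: "('a \<Rightarrow> 'a \<Rightarrow> 'a) \<Rightarrow> 'a \<Rightarrow> (real \<Rightarrow> 'a \<Rightarrow> 'a) \<Rightarrow> bool" where
  "prewedge add zero smul \<longleftrightarrow>
     (\<forall>u v. add u v = add v u) \<and>
     (\<forall>u v w. add (add u v) w = add u (add v w)) \<and>
     (\<forall>v. add zero v = v) \<and>
     (\<forall>l e v. 0 \<le> l \<longrightarrow> 0 \<le> e \<longrightarrow> smul l (smul e v) = smul (l * e) v) \<and>
     (\<forall>v. smul 0 v = zero) \<and>
     (\<forall>v. smul 1 v = v) \<and>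
     (\<forall>l e v. 0 \<le> l \<longrightarrow> 0 \<le> e \<longrightarrow> smul (l + e) v = add (smul l v) (smul e v)) \<and>
     (\<forall>l v w. 0 \<le> l \<longrightarrow> smul l (add v w) = add (smul l v) (smul l w))"

definition cle :: "('a \<Rightarrow> 'a \<Rightarrow> 'a) \<Rightarrow> 'a \<Rightarrow> 'a \<Rightarrow> bool" where
  "cle add v w \<longleftrightarrow> (\<exists>z. add v z = w)"

definition is_csup :: "('a \<Rightarrow> 'a \<Rightarrow> 'a) \<Rightarrow> 'a set \<Rightarrow> 'a \<Rightarrow> bool" where
  "is_csup add A s \<longleftrightarrow> (\<forall>a\<in>A. cle add a s) \<and> (\<forall>u. (\<forall>a\<in>A. cle add a u) \<longrightarrow> cle add s u)"

definition is_cinf :: "('a \<Rightarrow> 'a \<Rightarrow> 'a) \<Rightarrow> 'a set \<Rightarrow> 'a \<Rightarrow> bool" where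
  "is_cinf add A i \<longleftrightarrow> (\<forall>a\<in>A. cle add i a) \<and> (\<forall>u. (\<forall>a\<in>A. cle add u a) \<longrightarrow> cle add u i)"

definition wedge :: "('a \<Rightarrow> 'a \<Rightarrow> 'a) \<Rightarrow> 'a \<Rightarrow> (real \<Rightarrow> 'a \<Rightarrow> 'a) \<Rightarrow> bool" where
  "wedge add zero smul \<longleftrightarrow> prewedge add zero smul \<and>
     (\<forall>v w. cle add v w \<longrightarrow> cle add w v \<longrightarrow> v = w) \<and>
     (\<forall>v. is_csup add {smul e v | e. 0 \<le> e \<and> e < 1} v)"

text \<open>Directed: every finite subset (including the empty one) has an upper bound in the set.\<close>
definition cdirected :: "('a \<Rightarrow> 'a \<Rightarrow> 'a) \<Rightarrow> 'a set \<Rightarrow> bool" where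
  "cdirected add D \<longleftrightarrow> (\<forall>F. finite F \<longrightarrow> F \<subseteq> D \<longrightarrow> (\<exists>u\<in>D. \<forall>f\<in>F. cle add f u))"

definition cone :: "('a \<Rightarrow> 'a \<Rightarrow> 'a) \<Rightarrow> 'a \<Rightarrow> (real \<Rightarrow> 'a \<Rightarrow> 'a) \<Rightarrow> bool" where
  "cone add zero smul \<longleftrightarrow> wedge add zero smul \<and>
     (\<forall>D. cdirected add D \<longrightarrow> (\<exists>s. is_csup add D s))"

definition cInf :: "('a \<Rightarrow> 'a \<Rightarrow> 'a) \<Rightarrow> 'a set \<Rightarrow> 'a" where
  "cInf add A = (THE i. is_cinf add A i)"

definition cSup :: "('a \<Rightarrow> 'a \<Rightarrow> 'a) \<Rightarrow> 'a set \<Rightarrow> 'a" where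
  "cSup add A = (THE s. is_csup add A s)"

definition cone_with_joins :: "('a \<Rightarrow> 'a \<Rightarrow> 'a) \<Rightarrow> 'a \<Rightarrow> (real \<Rightarrow> 'a \<Rightarrow> 'a) \<Rightarrow> bool" where
  "cone_with_joins add zero smul \<longleftrightarrow> cone add zero smul \<and>
     (\<forall>A. \<exists>i. is_cinf add A i) \<and>
     (\<forall>v A. cInf add ((\<lambda>a. add v a) ` A) = add v (cInf add A))"

definition cmeet :: "('a \<Rightarrow> 'a \<Rightarrow> 'a) \<Rightarrow> 'a \<Rightarrow> 'a \<Rightarrow> 'a" where
  "cmeet add x y = cInf add {x, y}"

definition cjoin :: "('a \<Rightarrow> 'a \<Rightarrow> 'a) \<Rightarrow> 'a \<Rightarrow> 'a \<Rightarrow> 'a" where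
  "cjoin add x y = cSup add {x, y}"

definition ceps :: "('a \<Rightarrow> 'a \<Rightarrow> 'a) \<Rightarrow> (real \<Rightarrow> 'a \<Rightarrow> 'a) \<Rightarrow> 'a \<Rightarrow> 'a" where
  "ceps add smul v = cInf add {smul l v | l. 0 < l}"

end

theory Submission
  imports Defs
begin

text \<open>Everything rests on the cancellation law \<open>u + p \<le> u + q \<Longrightarrow> p \<le> q + \<epsilon>u\<close>:
adding \<open>u + p \<le> u + q\<close> to itself \<open>n\<close> times and scaling by \<open>1/n\<close> gives
\<open>p + u/n \<le> q + u/n\<close>, and infima commute with translation. Together with translation
invariance of meets, cancellation yields \<open>x + y = x \<or> z + y \<and> w\<close> whenever
\<open>x + y = z + w\<close>; the distributivity estimates and the refinement properties follow
from this identity, each further use of cancellation costing a part at infinity.\<close>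

locale joined_cone =
  fixes add :: "'a \<Rightarrow> 'a \<Rightarrow> 'a" (infixl "\<oplus>" 65)
    and zero :: 'a
    and smul :: "real \<Rightarrow> 'a \<Rightarrow> 'a"
  assumes cone_with_joins: "cone_with_joins add zero smul"
begin

abbreviation cle_syntax :: "'a \<Rightarrow> 'a \<Rightarrow> bool" (infix "\<preceq>" 50)
  where "cle_syntax \<equiv> cle add"

abbreviation cmeet_syntax :: "'a \<Rightarrow> 'a \<Rightarrow> 'a" (infixl "\<sqinter>" 70)
  where "cmeet_syntax \<equiv> cmeet add"

abbreviation cjoin_syntax :: "'a \<Rightarrow> 'a \<Rightarrow> 'a" (infixl "\<squnion>" 70)
  where "cjoin_syntax \<equiv> cjoin add"

abbreviation ceps_syntax :: "'a \<Rightarrow> 'a" ("\<epsilon>")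
  where "ceps_syntax \<equiv> ceps add smul"

lemma prewedge: "prewedge add zero smul"
  using cone_with_joins unfolding cone_with_joins_def cone_def wedge_def by blast

lemma add_commute: "u \<oplus> v = v \<oplus> u"
  using prewedge unfolding prewedge_def by blast

lemma add_assoc: "u \<oplus> v \<oplus> w = u \<oplus> (v \<oplus> w)"
  using prewedge unfolding prewedge_def by blast

sublocale oplus: abel_semigroup add
  by unfold_locales (rule add_assoc, rule add_commute)

lemmas oplus_ac = oplus.assoc oplus.commute oplus.left_commute

lemma zero_add: "zero \<oplus> v = v"
  using prewedge unfolding prewedge_def by blast

lemma smul_smul: "0 \<le> l \<Longrightarrow> 0 \<le> m \<Longrightarrow> smul l (smul m v) = smul (l * m) v"
  using prewedge unfolding prewedge_def by blast

lemma smul_zero_left: "smul 0 v = zero"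
  using prewedge unfolding prewedge_def by blast

lemma smul_one: "smul 1 v = v"
  using prewedge unfolding prewedge_def by blast

lemma smul_add_left: "0 \<le> l \<Longrightarrow> 0 \<le> m \<Longrightarrow> smul (l + m) v = smul l v \<oplus> smul m v"
  using prewedge unfolding prewedge_def by blast

lemma smul_add_right: "0 \<le> l \<Longrightarrow> smul l (v \<oplus> w) = smul l v \<oplus> smul l w"
  using prewedge unfolding prewedge_def by blast

lemma cle_antisym: "u \<preceq> v \<Longrightarrow> v \<preceq> u \<Longrightarrow> u = v"
  using cone_with_joins unfolding cone_with_joins_def cone_def wedge_def by blast

lemma is_csup_scaled: "is_csup add {smul e v | e. 0 \<le> e \<and> e < 1} v"
  using cone_with_joins unfolding cone_with_joins_def cone_def wedge_def by blast

lemma ex_is_cinf: "\<exists>i. is_cinf add A i"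
  using cone_with_joins unfolding cone_with_joins_def by blast

lemma cInf_translate: "cInf add ((\<oplus>) v ` A) = v \<oplus> cInf add A"
  using cone_with_joins unfolding cone_with_joins_def by blast

lemma cle_refl: "v \<preceq> v"
  unfolding cle_def by (metis zero_add add_commute)

lemma cle_trans [trans]: "u \<preceq> v \<Longrightarrow> v \<preceq> w \<Longrightarrow> u \<preceq> w"
  unfolding cle_def by (metis add_assoc)

lemma cle_add_right: "v \<preceq> v \<oplus> w"
  unfolding cle_def by blast

lemma cle_add_left: "w \<preceq> v \<oplus> w"
  unfolding cle_def using add_commute by blast

lemma zero_cle: "zero \<preceq> v"
  unfolding cle_def using zero_add by blast

lemma add_left_mono: "p \<preceq> q \<Longrightarrow> r \<oplus> p \<preceq> r \<oplus> q"
  unfolding cle_def by (metis add_assoc)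

lemma add_right_mono: "p \<preceq> q \<Longrightarrow> p \<oplus> r \<preceq> q \<oplus> r"
  using add_left_mono add_commute by metis

lemma add_mono: "p \<preceq> q \<Longrightarrow> p' \<preceq> q' \<Longrightarrow> p \<oplus> p' \<preceq> q \<oplus> q'"
  using add_left_mono add_right_mono cle_trans by metis

lemma smul_right_mono: "0 \<le> l \<Longrightarrow> p \<preceq> q \<Longrightarrow> smul l p \<preceq> smul l q"
  unfolding cle_def using smul_add_right by metis

lemma smul_left_mono:
  assumes "0 \<le> l" "l \<le> m"
  shows "smul l v \<preceq> smul m v"
proof -
  have "smul m v = smul l v \<oplus> smul (m - l) v"
    using assms smul_add_left[of l "m - l" v] by simp
  then show ?thesis
    unfolding cle_def by metis
qed

lemma is_cinf_unique: "is_cinf add A i \<Longrightarrow> is_cinf add A j \<Longrightarrow> i = j"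
  unfolding is_cinf_def using cle_antisym by blast

lemma is_cinf_cInf: "is_cinf add A (cInf add A)"
proof -
  obtain i where i: "is_cinf add A i"
    using ex_is_cinf by blast
  then have "cInf add A = i"
    unfolding cInf_def using is_cinf_unique by blast
  with i show ?thesis
    by simp
qed

lemma cInf_lower: "a \<in> A \<Longrightarrow> cInf add A \<preceq> a"
  using is_cinf_cInf unfolding is_cinf_def by blast

lemma cInf_greatest: "(\<And>a. a \<in> A \<Longrightarrow> u \<preceq> a) \<Longrightarrow> u \<preceq> cInf add A"
  using is_cinf_cInf unfolding is_cinf_def by blast

lemma is_csup_cInf_upper_bounds: "is_csup add A (cInf add {u. \<forall>a\<in>A. a \<preceq> u})"
  unfolding is_csup_def by (auto intro: cInf_greatest cInf_lower)

lemma is_csup_unique: "is_csup add A s \<Longrightarrow> is_csup add A t \<Longrightarrow> s = t"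
  unfolding is_csup_def using cle_antisym by blast

lemma is_csup_cSup: "is_csup add A (cSup add A)"
proof -
  have "cSup add A = cInf add {u. \<forall>a\<in>A. a \<preceq> u}"
    unfolding cSup_def using is_csup_cInf_upper_bounds is_csup_unique by blast
  then show ?thesis
    using is_csup_cInf_upper_bounds by simp
qed

lemma cSup_upper: "a \<in> A \<Longrightarrow> a \<preceq> cSup add A"
  using is_csup_cSup unfolding is_csup_def by blast

lemma cSup_least: "(\<And>a. a \<in> A \<Longrightarrow> a \<preceq> u) \<Longrightarrow> cSup add A \<preceq> u"
  using is_csup_cSup unfolding is_csup_def by blast

lemma cmeet_lower1: "x \<sqinter> y \<preceq> x"
  unfolding cmeet_def by (rule cInf_lower) simp

lemma cmeet_lower2: "x \<sqinter> y \<preceq> y"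
  unfolding cmeet_def by (rule cInf_lower) simp

lemma cmeet_greatest: "u \<preceq> x \<Longrightarrow> u \<preceq> y \<Longrightarrow> u \<preceq> x \<sqinter> y"
  unfolding cmeet_def by (rule cInf_greatest) auto

lemma cmeet_commute: "x \<sqinter> y = y \<sqinter> x"
  unfolding cmeet_def by (simp add: insert_commute)

lemma cmeet_idem: "x \<sqinter> x = x"
  by (intro cle_antisym cmeet_lower1 cmeet_greatest cle_refl)

lemma add_cmeet_distrib_left: "v \<oplus> (x \<sqinter> y) = (v \<oplus> x) \<sqinter> (v \<oplus> y)"
  unfolding cmeet_def using cInf_translate[of v "{x, y}"] by simp

lemma add_cmeet_distrib_right: "(x \<sqinter> y) \<oplus> v = (x \<oplus> v) \<sqinter> (y \<oplus> v)"
  using add_cmeet_distrib_left add_commute by metis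

lemma cjoin_upper1: "x \<preceq> x \<squnion> y"
  unfolding cjoin_def by (rule cSup_upper) simp

lemma cjoin_upper2: "y \<preceq> x \<squnion> y"
  unfolding cjoin_def by (rule cSup_upper) simp

lemma cjoin_least: "x \<preceq> u \<Longrightarrow> y \<preceq> u \<Longrightarrow> x \<squnion> y \<preceq> u"
  unfolding cjoin_def by (rule cSup_least) auto

lemma ceps_lower: "0 < l \<Longrightarrow> \<epsilon> v \<preceq> smul l v"
  unfolding ceps_def by (rule cInf_lower) auto

lemma ceps_greatest: "(\<And>l. 0 < l \<Longrightarrow> u \<preceq> smul l v) \<Longrightarrow> u \<preceq> \<epsilon> v"
  unfolding ceps_def by (rule cInf_greatest) auto

lemma ceps_mono: "p \<preceq> q \<Longrightarrow> \<epsilon> p \<preceq> \<epsilon> q"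
  by (rule ceps_greatest) (meson ceps_lower cle_trans less_imp_le smul_right_mono)

lemma smul_ceps_le: "0 < m \<Longrightarrow> smul m (\<epsilon> v) \<preceq> \<epsilon> v"
proof (rule ceps_greatest)
  fix l :: real
  assume "0 < m" "0 < l"
  then have "smul m (\<epsilon> v) \<preceq> smul m (smul (l / m) v)"
    by (intro smul_right_mono ceps_lower) auto
  also have "smul m (smul (l / m) v) = smul l v"
    using \<open>0 < m\<close> \<open>0 < l\<close> smul_smul by simp
  finally show "smul m (\<epsilon> v) \<preceq> smul l v" .
qed

lemma smul_ceps: "0 < m \<Longrightarrow> smul m (\<epsilon> v) = \<epsilon> v"
proof (rule cle_antisym)
  assume m: "0 < m"
  then show "smul m (\<epsilon> v) \<preceq> \<epsilon> v"
    by (rule smul_ceps_le)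
  have "\<epsilon> v = smul m (smul (1 / m) (\<epsilon> v))"
    using m smul_smul smul_one by simp
  also have "\<dots> \<preceq> smul m (\<epsilon> v)"
    using m by (intro smul_right_mono smul_ceps_le) auto
  finally show "\<epsilon> v \<preceq> smul m (\<epsilon> v)" .
qed

lemma ceps_add_self: "\<epsilon> v \<oplus> \<epsilon> v = \<epsilon> v"
  using smul_ceps[of 2 v] smul_add_left[of 1 1 "\<epsilon> v"] smul_one by simp

text \<open>Each \<open>e (v + \<epsilon>v)\<close> with \<open>0 < e < 1\<close> is below \<open>e (v + (1/e - 1) v) = v\<close>, so
\<open>v + \<epsilon>v = sup\<^sub>e\<^sub><\<^sub>1 e (v + \<epsilon>v) \<le> v\<close>.\<close>

lemma add_ceps_self: "v \<oplus> \<epsilon> v = v"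
proof (rule cle_antisym)
  show "v \<preceq> v \<oplus> \<epsilon> v"
    by (rule cle_add_right)
  have scaled_le: "smul e (v \<oplus> \<epsilon> v) \<preceq> v" if e: "0 < e" "e < 1" for e
  proof -
    define l where "l = 1 / e - 1"
    have l: "0 < l"
      using e by (simp add: l_def field_simps)
    have "smul e (v \<oplus> \<epsilon> v) \<preceq> smul e (v \<oplus> smul l v)"
      using e l by (intro smul_right_mono add_left_mono ceps_lower) auto
    also have "smul e (v \<oplus> smul l v) = smul e (smul (1 + l) v)"
      using smul_add_left[of 1 l v] l smul_one by simp
    also have "\<dots> = v"
      using e l smul_smul smul_one by (simp add: l_def)
    finally show ?thesis .
  qed
  have "u \<preceq> v" if u: "u \<in> {smul e (v \<oplus> \<epsilon> v) | e. 0 \<le> e \<and> e < 1}" for u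
  proof -
    obtain e where "u = smul e (v \<oplus> \<epsilon> v)" "0 \<le> e" "e < 1"
      using u by blast
    then show ?thesis
      using scaled_le smul_zero_left zero_cle by (cases "e = 0") auto
  qed
  then show "v \<oplus> \<epsilon> v \<preceq> v"
    using is_csup_scaled[of "v \<oplus> \<epsilon> v"] unfolding is_csup_def by blast
qed

lemma cle_add_ceps:
  assumes "\<And>l. 0 < l \<Longrightarrow> p \<preceq> q \<oplus> smul l u"
  shows "p \<preceq> q \<oplus> \<epsilon> u"
proof -
  have "p \<preceq> cInf add ((\<oplus>) q ` {smul l u | l. 0 < l})"
    by (rule cInf_greatest) (auto intro: assms)
  then show ?thesis
    unfolding ceps_def cInf_translate .
qed

lemma smul_of_nat_add_cle:
  assumes "u \<oplus> p \<preceq> u \<oplus> q"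
  shows "smul (real n) p \<oplus> u \<preceq> smul (real n) q \<oplus> u"
proof (induction n)
  case 0
  show ?case
    by (simp add: smul_zero_left cle_refl)
next
  case (Suc n)
  have Suc_eq: "smul (real (Suc n)) r = smul (real n) r \<oplus> r" for r
    using smul_add_left[of "real n" 1 r] smul_one by (simp add: add.commute)
  have "smul (real (Suc n)) p \<oplus> u = p \<oplus> (smul (real n) p \<oplus> u)"
    by (simp only: Suc_eq) (simp add: oplus_ac)
  also have "\<dots> \<preceq> p \<oplus> (smul (real n) q \<oplus> u)"
    using Suc.IH by (rule add_left_mono)
  also have "\<dots> = smul (real n) q \<oplus> (u \<oplus> p)"
    by (simp add: oplus_ac)
  also have "\<dots> \<preceq> smul (real n) q \<oplus> (u \<oplus> q)"
    using assms by (rule add_left_mono)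
  also have "\<dots> = smul (real (Suc n)) q \<oplus> u"
    by (simp only: Suc_eq) (simp add: oplus_ac)
  finally show ?case .
qed

lemma add_left_cancel_cle:
  assumes "u \<oplus> p \<preceq> u \<oplus> q"
  shows "p \<preceq> q \<oplus> \<epsilon> u"
proof (rule cle_add_ceps)
  fix l :: real
  assume "0 < l"
  obtain n :: nat where n: "1 / l < real n"
    using reals_Archimedean2 by blast
  with \<open>0 < l\<close> have n_pos: "0 < real n"
    by (meson divide_pos_pos less_trans zero_less_one)
  with \<open>0 < l\<close> n have "1 / real n < l"
    by (simp add: field_simps)
  have scale: "smul (1 / real n) (smul (real n) r \<oplus> u) = r \<oplus> smul (1 / real n) u" for r
    using n_pos smul_add_right smul_smul smul_one by simp
  have "p \<preceq> p \<oplus> smul (1 / real n) u"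
    by (rule cle_add_right)
  also have "\<dots> \<preceq> q \<oplus> smul (1 / real n) u"
  proof -
    have "smul (1 / real n) (smul (real n) p \<oplus> u) \<preceq> smul (1 / real n) (smul (real n) q \<oplus> u)"
      using n_pos by (intro smul_right_mono smul_of_nat_add_cle[OF assms]) simp
    then show ?thesis
      by (simp only: scale)
  qed
  also have "\<dots> \<preceq> q \<oplus> smul l u"
    using n_pos \<open>1 / real n < l\<close> by (intro add_left_mono smul_left_mono) auto
  finally show "p \<preceq> q \<oplus> smul l u" .
qed

lemma ceps_add_cle: "\<epsilon> (u \<oplus> v) \<preceq> \<epsilon> u \<oplus> \<epsilon> v"
proof -
  have "\<epsilon> (u \<oplus> v) \<preceq> smul l u \<oplus> \<epsilon> v" if "0 < l" for l
  proof (rule cle_add_ceps)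
    fix m :: real
    assume "0 < m"
    with \<open>0 < l\<close> have "\<epsilon> (u \<oplus> v) \<preceq> smul (min l m) (u \<oplus> v)"
      by (intro ceps_lower) simp
    also have "\<dots> = smul (min l m) u \<oplus> smul (min l m) v"
      using \<open>0 < l\<close> \<open>0 < m\<close> smul_add_right by simp
    also have "\<dots> \<preceq> smul l u \<oplus> smul m v"
      using \<open>0 < l\<close> \<open>0 < m\<close> by (intro add_mono smul_left_mono) auto
    finally show "\<epsilon> (u \<oplus> v) \<preceq> smul l u \<oplus> smul m v" .
  qed
  then have "\<epsilon> (u \<oplus> v) \<preceq> \<epsilon> v \<oplus> \<epsilon> u"
    by (intro cle_add_ceps) (simp add: add_commute)
  then show ?thesis
    by (simp add: add_commute)
qed

lemma add_cSup_cle: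
  assumes "A \<noteq> {}"
  shows "u \<oplus> cSup add A \<preceq> cSup add ((\<oplus>) u ` A) \<oplus> \<epsilon> u"
proof -
  obtain a0 where "a0 \<in> A"
    using assms by blast
  then have "u \<preceq> cSup add ((\<oplus>) u ` A)"
    by (meson cle_add_right cle_trans cSup_upper imageI)
  then obtain r where r: "u \<oplus> r = cSup add ((\<oplus>) u ` A)"
    unfolding cle_def by blast
  have "a \<preceq> r \<oplus> \<epsilon> u" if "a \<in> A" for a
    using that r by (intro add_left_cancel_cle) (simp add: cSup_upper)
  then have "cSup add A \<preceq> r \<oplus> \<epsilon> u"
    by (rule cSup_least)
  then have "u \<oplus> cSup add A \<preceq> u \<oplus> (r \<oplus> \<epsilon> u)"
    by (rule add_left_mono)
  then show ?thesis
    by (simp add: add_assoc flip: r)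
qed

lemma add_left_cancel_eq:
  assumes "u \<oplus> p = u \<oplus> q" and "\<epsilon> u \<preceq> e" and "e \<oplus> e = e"
  shows "p \<oplus> e = q \<oplus> e"
proof -
  have "p' \<oplus> e \<preceq> q' \<oplus> e" if "u \<oplus> p' = u \<oplus> q'" for p' q'
  proof -
    have "p' \<oplus> e \<preceq> q' \<oplus> \<epsilon> u \<oplus> e"
      using that by (intro add_right_mono add_left_cancel_cle) (simp add: cle_refl)
    also have "\<dots> \<preceq> q' \<oplus> e \<oplus> e"
      using assms(2) by (intro add_right_mono add_left_mono)
    finally show ?thesis
      using assms(3) by (simp add: add_assoc)
  qed
  then show ?thesis
    using assms(1) by (metis cle_antisym)
qed

lemma add_ceps_absorb:
  assumes "w \<preceq> v1 \<oplus> v2"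
  shows "v2 \<oplus> \<epsilon> v1 \<oplus> \<epsilon> w = v2 \<oplus> \<epsilon> v1"
proof (rule cle_antisym)
  have "\<epsilon> w \<preceq> \<epsilon> v1 \<oplus> \<epsilon> v2"
    using assms ceps_mono ceps_add_cle cle_trans by blast
  then have "v2 \<oplus> \<epsilon> v1 \<oplus> \<epsilon> w \<preceq> v2 \<oplus> \<epsilon> v1 \<oplus> (\<epsilon> v1 \<oplus> \<epsilon> v2)"
    by (rule add_left_mono)
  also have "\<dots> = (v2 \<oplus> \<epsilon> v2) \<oplus> (\<epsilon> v1 \<oplus> \<epsilon> v1)"
    by (simp add: oplus_ac)
  also have "\<dots> = v2 \<oplus> \<epsilon> v1"
    by (simp add: add_ceps_self ceps_add_self)
  finally show "v2 \<oplus> \<epsilon> v1 \<oplus> \<epsilon> w \<preceq> v2 \<oplus> \<epsilon> v1" .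
qed (rule cle_add_right)

lemma cmeet_add_cle: "(x \<oplus> y) \<sqinter> z \<preceq> (x \<sqinter> z) \<oplus> (y \<sqinter> z)"
proof -
  let ?m = "(x \<oplus> y) \<sqinter> z"
  have "?m \<preceq> (x \<oplus> y) \<sqinter> (x \<oplus> z)"
    by (meson cmeet_greatest cmeet_lower1 cmeet_lower2 cle_add_left cle_trans)
  then have x_bound: "?m \<preceq> (y \<sqinter> z) \<oplus> x"
    by (simp add: add_cmeet_distrib_left add_commute)
  have "?m \<preceq> (z \<oplus> y) \<sqinter> (z \<oplus> z)"
    by (meson cmeet_greatest cmeet_lower2 cle_add_right cle_trans)
  then have z_bound: "?m \<preceq> (y \<sqinter> z) \<oplus> z"
    by (simp add: add_cmeet_distrib_left add_commute)
  from x_bound z_bound have "?m \<preceq> ((y \<sqinter> z) \<oplus> x) \<sqinter> ((y \<sqinter> z) \<oplus> z)"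
    by (rule cmeet_greatest)
  also have "\<dots> = (x \<sqinter> z) \<oplus> (y \<sqinter> z)"
    by (metis add_cmeet_distrib_left add_commute)
  finally show ?thesis .
qed

text \<open>For \<open>a = y \<and> w\<close> the element \<open>a + \<epsilon>a = a\<close> absorbs what cancellation loses,
so \<open>x, z \<le> t := (x + c + \<epsilon>a) \<and> (z + d + \<epsilon>a)\<close> where \<open>y = a + c\<close>, \<open>w = a + d\<close>,
while \<open>a + t = x + y\<close>.\<close>

lemma add_eq_cjoin_add_cmeet:
  assumes sum: "x \<oplus> y = z \<oplus> w"
  shows "x \<oplus> y = (x \<squnion> z) \<oplus> (y \<sqinter> w)"
proof (rule cle_antisym)
  have "x \<oplus> y \<preceq> (x \<squnion> z) \<oplus> y"
    by (intro add_right_mono cjoin_upper1)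
  moreover have "x \<oplus> y \<preceq> (x \<squnion> z) \<oplus> w"
    unfolding sum by (intro add_right_mono cjoin_upper2)
  ultimately show "x \<oplus> y \<preceq> (x \<squnion> z) \<oplus> (y \<sqinter> w)"
    by (simp add: cmeet_greatest add_cmeet_distrib_left)
next
  define a where "a = y \<sqinter> w"
  obtain c d where c: "a \<oplus> c = y" and d: "a \<oplus> d = w"
    unfolding a_def using cmeet_lower1 cmeet_lower2 unfolding cle_def by metis
  have bound: "p \<preceq> q \<oplus> s \<oplus> \<epsilon> a" if "p \<oplus> (a \<oplus> r) = q \<oplus> (a \<oplus> s)" for p q r s
  proof -
    have "a \<oplus> p \<preceq> a \<oplus> p \<oplus> r"
      by (rule cle_add_right)
    also have "\<dots> = a \<oplus> (q \<oplus> s)"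
      using that by (simp add: oplus_ac)
    finally show ?thesis
      by (simp add: add_left_cancel_cle flip: add_assoc)
  qed
  define t where "t = (x \<oplus> c \<oplus> \<epsilon> a) \<sqinter> (z \<oplus> d \<oplus> \<epsilon> a)"
  have "x \<preceq> t" and "z \<preceq> t"
    unfolding t_def using bound[of x c z d] bound[of z d x c] sum c d
    by (auto intro!: cmeet_greatest simp: cle_add_right add_assoc)
  then have "(x \<squnion> z) \<oplus> a \<preceq> t \<oplus> a"
    by (intro add_right_mono cjoin_least)
  also have "t \<oplus> a = x \<oplus> y"
  proof -
    have "x \<oplus> c \<oplus> \<epsilon> a \<oplus> a = x \<oplus> c \<oplus> a" and "z \<oplus> d \<oplus> \<epsilon> a \<oplus> a = z \<oplus> d \<oplus> a"
      by (simp_all add: add_assoc add_commute[of "\<epsilon> a" a] add_ceps_self)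
    moreover have "x \<oplus> c \<oplus> a = x \<oplus> y"
      by (simp add: oplus_ac flip: c)
    moreover have "z \<oplus> d \<oplus> a = x \<oplus> y"
      unfolding sum by (simp add: oplus_ac flip: d)
    ultimately show ?thesis
      unfolding t_def add_cmeet_distrib_right by (simp add: cmeet_idem)
  qed
  finally show "(x \<squnion> z) \<oplus> (y \<sqinter> w) \<preceq> x \<oplus> y"
    unfolding a_def .
qed

lemma add_eq_cjoin_add_cmeet_self: "x \<oplus> y = (x \<squnion> y) \<oplus> (x \<sqinter> y)"
  using add_eq_cjoin_add_cmeet[of x y y x] add_commute cmeet_commute by metis

lemma cSup_cmeet_cle: "cSup add ((\<lambda>i. x i \<sqinter> y) ` I) \<preceq> cSup add (x ` I) \<sqinter> y"
proof (rule cSup_least)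
  fix a
  assume "a \<in> (\<lambda>i. x i \<sqinter> y) ` I"
  then obtain i where "i \<in> I" and a: "a = x i \<sqinter> y"
    by blast
  then have "x i \<preceq> cSup add (x ` I)"
    by (intro cSup_upper) simp
  then show "a \<preceq> cSup add (x ` I) \<sqinter> y"
    unfolding a by (meson cmeet_greatest cmeet_lower1 cmeet_lower2 cle_trans)
qed

text \<open>With \<open>X = sup x\<^sub>i\<close>, \<open>m = sup (x\<^sub>i \<and> y)\<close> and \<open>j = y \<or> X\<close>: by part (b),
\<open>j + X \<and> y = y + X \<le> sup (y + x\<^sub>i) + \<epsilon>y \<le> j + m + \<epsilon>y\<close>, and cancelling \<open>j\<close> costs \<open>\<epsilon>j\<close>,
which absorbs \<open>\<epsilon>y\<close>.\<close>

lemma cmeet_cSup_cle: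
  "cSup add (x ` I) \<sqinter> y \<preceq> cSup add ((\<lambda>i. x i \<sqinter> y) ` I) \<oplus> \<epsilon> (y \<squnion> cSup add (x ` I))"
proof (cases "I = {}")
  case True
  have "cSup add (x ` I) \<sqinter> y \<preceq> cSup add (x ` I)"
    by (rule cmeet_lower1)
  also have "cSup add (x ` I) \<preceq> u" for u
    using True by (intro cSup_least) simp
  finally show ?thesis .
next
  case False
  define X where "X = cSup add (x ` I)"
  define m where "m = cSup add ((\<lambda>i. x i \<sqinter> y) ` I)"
  define j where "j = y \<squnion> X"
  have summand_bound: "y \<oplus> x i \<preceq> j \<oplus> m" if "i \<in> I" for i
  proof -
    have "x i \<preceq> X"
      unfolding X_def using that by (intro cSup_upper) simp
    then have "y \<squnion> x i \<preceq> j"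
      unfolding j_def by (meson cjoin_upper1 cjoin_upper2 cjoin_least cle_trans)
    moreover have "y \<sqinter> x i \<preceq> m"
      unfolding m_def using that by (simp add: cmeet_commute cSup_upper)
    ultimately show ?thesis
      using add_eq_cjoin_add_cmeet_self add_mono by metis
  qed
  have "j \<oplus> (X \<sqinter> y) = y \<oplus> X"
    unfolding j_def using add_eq_cjoin_add_cmeet_self cmeet_commute by metis
  also have "\<dots> \<preceq> cSup add ((\<oplus>) y ` x ` I) \<oplus> \<epsilon> y"
    unfolding X_def using False by (intro add_cSup_cle) simp
  also have "\<dots> \<preceq> j \<oplus> m \<oplus> \<epsilon> y"
    by (intro add_right_mono cSup_least) (auto intro: summand_bound)
  also have "\<dots> = j \<oplus> (m \<oplus> \<epsilon> y)"
    by (rule add_assoc)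
  finally have "X \<sqinter> y \<preceq> m \<oplus> \<epsilon> y \<oplus> \<epsilon> j"
    by (rule add_left_cancel_cle)
  also have "\<dots> \<preceq> m \<oplus> \<epsilon> j \<oplus> \<epsilon> j"
    unfolding j_def by (intro add_right_mono add_left_mono ceps_mono cjoin_upper1)
  finally show ?thesis
    unfolding X_def m_def j_def by (simp add: add_assoc ceps_add_self)
qed

lemma refinement_row:
  assumes sum: "v1 \<oplus> v2 = w1 \<oplus> w2" and r: "(v1 \<sqinter> w1) \<oplus> r = w1"
  shows "r \<oplus> (v2 \<sqinter> w2) \<oplus> \<epsilon> v1 = v2 \<oplus> \<epsilon> v1"
proof (rule add_left_cancel_eq)
  let ?a = "v1 \<sqinter> w1" and ?b = "v2 \<sqinter> w2"
  have "v1 \<oplus> ?a \<oplus> (r \<oplus> ?b) = v1 \<oplus> (?a \<oplus> r) \<oplus> ?b"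
    by (simp add: oplus_ac)
  also have "\<dots> = v1 \<oplus> w1 \<oplus> ?b"
    using r by simp
  also have "\<dots> = (v1 \<squnion> w1) \<oplus> ?a \<oplus> ?b"
    using add_eq_cjoin_add_cmeet_self[of v1 w1] by simp
  also have "\<dots> = ?a \<oplus> (v1 \<oplus> v2)"
    using add_eq_cjoin_add_cmeet[OF sum] by (simp add: oplus_ac)
  finally show "v1 \<oplus> ?a \<oplus> (r \<oplus> ?b) = v1 \<oplus> ?a \<oplus> v2"
    by (simp add: oplus_ac)
  have "\<epsilon> (v1 \<oplus> ?a) \<preceq> \<epsilon> v1 \<oplus> \<epsilon> ?a"
    by (rule ceps_add_cle)
  also have "\<dots> \<preceq> \<epsilon> v1 \<oplus> \<epsilon> v1"
    by (intro add_left_mono ceps_mono cmeet_lower1)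
  finally show "\<epsilon> (v1 \<oplus> ?a) \<preceq> \<epsilon> v1"
    by (simp add: ceps_add_self)
qed (rule ceps_add_self)

lemma refinement_ceps:
  assumes sum: "v1 \<oplus> v2 = w1 \<oplus> w2"
  shows "\<exists>z11 z12 z21 z22. z11 \<oplus> z12 = v1 \<and> z21 \<oplus> z22 = v2 \<oplus> \<epsilon> v1
           \<and> z11 \<oplus> z21 = w1 \<and> z12 \<oplus> z22 = w2 \<oplus> \<epsilon> w1"
proof -
  obtain z12 z21 where z12: "(v1 \<sqinter> w1) \<oplus> z12 = v1" and z21: "(v1 \<sqinter> w1) \<oplus> z21 = w1"
    using cmeet_lower1 cmeet_lower2 unfolding cle_def by metis
  define z22 where "z22 = (v2 \<sqinter> w2) \<oplus> (\<epsilon> v1 \<oplus> \<epsilon> w1)"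
  have "z21 \<oplus> z22 = v2 \<oplus> \<epsilon> v1 \<oplus> \<epsilon> w1"
    using refinement_row[OF sum z21] by (simp add: z22_def flip: add_assoc)
  also have "\<dots> = v2 \<oplus> \<epsilon> v1"
    using sum by (intro add_ceps_absorb) (metis cle_add_right)
  finally have row2: "z21 \<oplus> z22 = v2 \<oplus> \<epsilon> v1" .
  have "z12 \<oplus> (v2 \<sqinter> w2) \<oplus> \<epsilon> w1 = w2 \<oplus> \<epsilon> w1"
    using refinement_row[OF sum[symmetric], of z12] z12 by (simp add: cmeet_commute)
  then have "z12 \<oplus> z22 = w2 \<oplus> \<epsilon> w1 \<oplus> \<epsilon> v1"
    unfolding z22_def by (metis oplus_ac)
  also have "\<dots> = w2 \<oplus> \<epsilon> w1"
    using sum by (intro add_ceps_absorb) (metis cle_add_right)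
  finally show ?thesis
    using z12 z21 row2 by blast
qed

lemma refinement_cle:
  assumes sum: "v1 \<oplus> v2 = w1 \<oplus> w2"
  shows "\<exists>z11 z12 z21 z22. z11 \<oplus> z12 = v1 \<and> z21 \<oplus> z22 = v2
           \<and> w1 \<preceq> z11 \<oplus> z21 \<oplus> \<epsilon> w2 \<and> w2 \<preceq> z12 \<oplus> z22 \<oplus> \<epsilon> w1"
proof -
  define a where "a = v1 \<sqinter> w1"
  obtain z12 c where z12: "a \<oplus> z12 = v1" and c: "a \<oplus> c = w1"
    unfolding a_def using cmeet_lower1 cmeet_lower2 unfolding cle_def by metis
  obtain z22 where z22: "(v2 \<sqinter> c) \<oplus> z22 = v2"
    using cmeet_lower1 unfolding cle_def by metis
  have "w2 \<oplus> w1 = (v2 \<squnion> w2) \<oplus> a"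
    unfolding a_def using add_eq_cjoin_add_cmeet sum by (metis add_commute)
  also have "\<dots> \<preceq> (v2 \<oplus> w2) \<oplus> a"
    by (intro add_right_mono cjoin_least cle_add_right cle_add_left)
  also have "\<dots> = w2 \<oplus> (a \<oplus> v2)"
    by (simp add: oplus_ac)
  finally have "w1 \<preceq> a \<oplus> v2 \<oplus> \<epsilon> w2"
    by (rule add_left_cancel_cle)
  moreover have "w1 \<preceq> a \<oplus> c \<oplus> \<epsilon> w2"
    using c cle_add_right by simp
  ultimately have w1_bound: "w1 \<preceq> a \<oplus> (v2 \<sqinter> c) \<oplus> \<epsilon> w2"
    by (simp add: cmeet_greatest add_cmeet_distrib_left add_cmeet_distrib_right)
  have "w1 \<oplus> w2 = (a \<oplus> z12) \<oplus> ((v2 \<sqinter> c) \<oplus> z22)"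
    using sum z12 z22 by simp
  also have "\<dots> = a \<oplus> (v2 \<sqinter> c) \<oplus> (z12 \<oplus> z22)"
    by (simp add: oplus_ac)
  also have "\<dots> \<preceq> a \<oplus> c \<oplus> (z12 \<oplus> z22)"
    by (intro add_right_mono add_left_mono cmeet_lower2)
  also have "\<dots> = w1 \<oplus> (z12 \<oplus> z22)"
    using c by simp
  finally have "w2 \<preceq> z12 \<oplus> z22 \<oplus> \<epsilon> w1"
    by (rule add_left_cancel_cle)
  with z12 z22 w1_bound show ?thesis
    by blast
qed

end

theorem mainTheorem10:
  fixes add :: "'a \<Rightarrow> 'a \<Rightarrow> 'a" and zero :: 'a and smul :: "real \<Rightarrow> 'a \<Rightarrow> 'a"
  assumes J: "cone_with_joins add zero smul"
  shows
    "(\<forall>x y z. cle add (cmeet add (add x y) z) (add (cmeet add x z) (cmeet add y z)))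
   \<and> (\<forall>x y z w. add x y = add z w \<longrightarrow> add x y = add (cjoin add x z) (cmeet add y w))
   \<and> (\<forall>x y. add x y = add (cjoin add x y) (cmeet add x y))
   \<and> (\<forall>(I :: 'i set) (x :: 'i \<Rightarrow> 'a) y.
        cle add (cSup add ((\<lambda>i. cmeet add (x i) y) ` I)) (cmeet add (cSup add (x ` I)) y)
      \<and> cle add (cmeet add (cSup add (x ` I)) y)
          (add (cSup add ((\<lambda>i. cmeet add (x i) y) ` I)) (ceps add smul (cjoin add y (cSup add (x ` I))))))
   \<and> (\<forall>v1 v2 w1 w2. add v1 v2 = add w1 w2 \<longrightarrow>
        (\<exists>z11 z12 z21 z22. add z11 z12 = v1 \<and> add z21 z22 = add v2 (ceps add smul v1)
           \<and> add z11 z21 = w1 \<and> add z12 z22 = add w2 (ceps add smul w1)))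
   \<and> (\<forall>v1 v2 w1 w2. add v1 v2 = add w1 w2 \<longrightarrow>
        (\<exists>z11 z12 z21 z22. add z11 z12 = v1 \<and> add z21 z22 = v2
           \<and> cle add w1 (add (add z11 z21) (ceps add smul w2))
           \<and> cle add w2 (add (add z12 z22) (ceps add smul w1))))"
proof -
  interpret joined_cone add zero smul
    using J by (rule joined_cone.intro)
  show ?thesis
    using cmeet_add_cle add_eq_cjoin_add_cmeet add_eq_cjoin_add_cmeet_self
      cSup_cmeet_cle cmeet_cSup_cle refinement_ceps refinement_cle
    by blast
qed

end
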